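(* Let $H$ be a finite group, $p$ a prime, and $S$ a Sylow $p$-subgroup of $H$. If $Z(S) \leq O_{p',p}(H)$, then $Z(S)$ splits over $W_H(S)$, i.e., there is a subgroup $K \leq Z(S)$ with $Z(S) = W_H(S) \times K$.
   Context: For a finite group $G$ with Sylow $p$-subgroup $S$, an element $x \in S$ is weakly closed in $S$ with respect to $G$ if $x^g = x$ whenever $g \in G$ and $x^g := g^{-1}xg \in S$. $W_G(S)$ denotes the subgroup of all elements of $S$ that are weakly closed in $S$ with respect to $G$. $O_{p'}(H)$ is the largest normal $p'$-subgroup of $H$, and $O_{p',p}(H)$ is the normal subgroup of $H$ containing $O_{p'}(H)$ with $O_{p',p}(H)/O_{p'}(H) = O_p(H/O_{p'}(H))$, where $O_p$ denotes the largest normal $p$-subgroup. *)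

theory Defs
  imports "HOL-Algebra.Algebra"
begin

definition sylow_subgroup :: "('a, 'b) monoid_scheme \<Rightarrow> nat \<Rightarrow> 'a set \<Rightarrow> bool" where
  "sylow_subgroup G p S \<longleftrightarrow> subgroup S G \<and> card S = p ^ multiplicity p (order G)"

definition centre :: "('a, 'b) monoid_scheme \<Rightarrow> 'a set \<Rightarrow> 'a set" where
  "centre G S = {z \<in> S. \<forall>x \<in> S. z \<otimes>\<^bsub>G\<^esub> x = x \<otimes>\<^bsub>G\<^esub> z}"

definition weakly_closed :: "('a, 'b) monoid_scheme \<Rightarrow> 'a set \<Rightarrow> 'a \<Rightarrow> bool" where
  "weakly_closed G S x \<longleftrightarrow> x \<in> S \<and>
     (\<forall>g \<in> carrier G. inv\<^bsub>G\<^esub> g \<otimes>\<^bsub>G\<^esub> x \<otimes>\<^bsub>G\<^esub> g \<in> S \<longrightarrow> inv\<^bsub>G\<^esub> g \<otimes>\<^bsub>G\<^esub> x \<otimes>\<^bsub>G\<^esub> g = x)"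

definition W :: "('a, 'b) monoid_scheme \<Rightarrow> 'a set \<Rightarrow> 'a set" where
  "W G S = {x \<in> S. weakly_closed G S x}"

definition largest_normal :: "('a, 'b) monoid_scheme \<Rightarrow> ('a set \<Rightarrow> bool) \<Rightarrow> 'a set" where
  "largest_normal G P = (THE N. N \<lhd> G \<and> P N \<and> (\<forall>M. M \<lhd> G \<and> P M \<longrightarrow> M \<subseteq> N))"

definition p_group_set :: "nat \<Rightarrow> 'a set \<Rightarrow> bool" where
  "p_group_set p N \<longleftrightarrow> (\<exists>n. card N = p ^ n)"

definition p'_group_set :: "nat \<Rightarrow> 'a set \<Rightarrow> bool" where
  "p'_group_set p N \<longleftrightarrow> finite N \<and> \<not> p dvd card N"

definition O_p :: "('a, 'b) monoid_scheme \<Rightarrow> nat \<Rightarrow> 'a set" where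
  "O_p G p = largest_normal G (p_group_set p)"

definition O_p' :: "('a, 'b) monoid_scheme \<Rightarrow> nat \<Rightarrow> 'a set" where
  "O_p' G p = largest_normal G (p'_group_set p)"

definition O_p'p :: "('a, 'b) monoid_scheme \<Rightarrow> nat \<Rightarrow> 'a set" where
  "O_p'p G p = {g \<in> carrier G. O_p' G p #>\<^bsub>G\<^esub> g \<in> O_p (G Mod (O_p' G p)) p}"

end

theory Submission
  imports Defs "HOL-Combinatorics.Orbits"
begin

(* Write N = O_{p'}(H), Q = O_{p',p}(H) and P = S \<inter> Q. Comparing orders shows Q = NP with
   N \<inter> P = 1, so projecting Q onto P along N turns conjugation by H into an action of H on P in
   which N acts trivially. Every p-element of Q is N-conjugate into P (the p-element acts on the
   |N| cosets of P in Q, and p does not divide |N|), hence an element of Z(S) \<le> P is weakly closed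
   exactly when it is fixed by this action. The norm map u \<mapsto> \<Prod>_{Sg} u\<^sup>g over the right
   cosets of S is a homomorphism from Z(S) into the fixed points W = W_H(S), and on W it is the
   |H:S|-th power map, which is bijective because p does not divide |H:S|. Its kernel is therefore
   a complement of W in Z(S). *)

section \<open>Maps of prime-power period\<close>

lemma card_orbit_dvd_period:
  assumes "(f ^^ n) x = x" "0 < n"
  shows "card (orbit f x) dvd n"
proof -
  have x: "x \<in> orbit f x" using assms by (auto simp: orbit_altdef intro!: exI[of _ n])
  define d where "d = funpow_dist1 f x x"
  have card: "card (orbit f x) = d"
    using orbit_conv_funpow_dist1[OF x] inj_on_funpow_dist1[OF x] by (simp add: d_def card_image)
  have "(f ^^ (n mod d)) x = x"
    using funpow_mod_eq[of d f x n] funpow_dist1_prop[OF x] assms(1) by (simp add: d_def)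
  then have "n mod d = 0"
    using funpow_dist1_least[of "n mod d" f x x] by (fastforce simp: d_def)
  then show ?thesis by (simp add: card mod_eq_0_iff_dvd)
qed

lemma prime_dvd_card_orbit:
  assumes periodic: "(f ^^ (p ^ k)) x = x" and p: "Factorial_Ring.prime p" and moved: "f x \<noteq> x"
  shows "p dvd card (orbit f x)"
proof -
  have p_pos: "0 < p ^ k" using p prime_gt_0_nat by simp
  obtain i where i: "card (orbit f x) = p ^ i"
    using card_orbit_dvd_period[OF periodic p_pos] divides_primepow_nat[OF p] by blast
  have "x \<in> orbit f x" using periodic p_pos by (auto simp: orbit_altdef intro!: exI[of _ "p ^ k"])
  moreover have "orbit f x \<noteq> {x}" using moved orbit_eq_singleton_iff by metis
  ultimately have "i \<noteq> 0" using i by (metis card_1_singletonE power_0 singletonD)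
  then show ?thesis using i by simp
qed

lemma prime_power_periodic_map_fixed_point:
  assumes fin: "finite A" and closed: "f ` A \<subseteq> A"
    and periodic: "\<And>x. x \<in> A \<Longrightarrow> (f ^^ (p ^ k)) x = x"
    and p: "Factorial_Ring.prime p" and coprime: "\<not> p dvd card A"
  shows "\<exists>x\<in>A. f x = x"
proof (rule ccontr)
  assume no_fixed: "\<not> (\<exists>x\<in>A. f x = x)"
  have self: "x \<in> orbit f x" if "x \<in> A" for x
    using periodic[OF that] p prime_gt_0_nat by (auto simp: orbit_altdef intro!: exI[of _ "p ^ k"])
  have orbit_sub: "orbit f x \<subseteq> A" if "x \<in> A" for x
  proof
    fix y assume "y \<in> orbit f x"
    then show "y \<in> A" using that closed by induction auto
  qed
  have orbit_eq: "orbit f y = orbit f x" if "x \<in> A" "y \<in> orbit f x" for x y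
  proof -
    have "x \<in> orbit f y" using orbit_swap[OF self[OF that(1)] that(2)] .
    then show ?thesis using that(2) by (blast intro: orbit_trans)
  qed
  have disjoint: "pairwise disjnt (orbit f ` A)"
  proof (rule pairwiseI)
    fix C D assume "C \<in> orbit f ` A" "D \<in> orbit f ` A" "C \<noteq> D"
    then show "disjnt C D" unfolding disjnt_def using orbit_eq by blast
  qed
  have "A = \<Union> (orbit f ` A)" using self orbit_sub by blast
  moreover have "finite C" if "C \<in> orbit f ` A" for C using that fin orbit_sub finite_subset by blast
  ultimately have "card A = (\<Sum>C \<in> orbit f ` A. card C)"
    using card_Union_disjoint[OF disjoint] by simp
  moreover have "p dvd card C" if C: "C \<in> orbit f ` A" for C
  proof -
    obtain x where "x \<in> A" "C = orbit f x" using C by blast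
    then show ?thesis using prime_dvd_card_orbit[OF periodic p] no_fixed by blast
  qed
  ultimately have "p dvd card A" by (simp add: dvd_sum)
  then show False using coprime by contradiction
qed

lemma (in group) inv_mult_cancel_left [simp]:
  "\<lbrakk>x \<in> carrier G; y \<in> carrier G\<rbrakk> \<Longrightarrow> inv x \<otimes> (x \<otimes> y) = y"
  by (simp add: m_assoc[symmetric])

lemma (in group) mult_inv_cancel_left [simp]:
  "\<lbrakk>x \<in> carrier G; y \<in> carrier G\<rbrakk> \<Longrightarrow> x \<otimes> (inv x \<otimes> y) = y"
  by (simp add: m_assoc[symmetric])

lemma (in group) conj_nat_pow:
  assumes "g \<in> carrier G" "x \<in> carrier G"
  shows "(inv g \<otimes> x \<otimes> g) [^] (k::nat) = inv g \<otimes> x [^] k \<otimes> g"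
proof (induction k)
  case (Suc k)
  then have "(inv g \<otimes> x \<otimes> g) [^] Suc k = inv g \<otimes> x [^] k \<otimes> (g \<otimes> inv g) \<otimes> x \<otimes> g"
    using assms by (simp add: m_assoc)
  then show ?case using assms by (simp add: m_assoc)
qed (use assms in simp)

lemma (in group) card_set_mult_fibre:
  assumes A: "subgroup A G" and B: "subgroup B G" and a0: "a0 \<in> A" and b0: "b0 \<in> B"
  shows "card {(a, b) \<in> A \<times> B. a \<otimes> b = a0 \<otimes> b0} = card (A \<inter> B)"
proof -
  interpret A: subgroup A G by fact
  interpret B: subgroup B G by fact
  have "{(a, b) \<in> A \<times> B. a \<otimes> b = a0 \<otimes> b0} = (\<lambda>c. (a0 \<otimes> c, inv c \<otimes> b0)) ` (A \<inter> B)"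
  proof (intro equalityI subsetI)
    fix u assume "u \<in> {(a, b) \<in> A \<times> B. a \<otimes> b = a0 \<otimes> b0}"
    then obtain a b where ab: "a \<in> A" "b \<in> B" "a \<otimes> b = a0 \<otimes> b0" and u: "u = (a, b)" by blast
    have c: "inv a0 \<otimes> a = b0 \<otimes> inv b"
      using ab a0 b0 by (metis A.mem_carrier B.mem_carrier inv_solve_left' inv_solve_right m_assoc m_closed inv_closed)
    have "b0 \<otimes> inv b \<in> B" using ab b0 by simp
    then have "inv a0 \<otimes> a \<in> A \<inter> B" using ab a0 by (simp add: c[symmetric])
    moreover have "a0 \<otimes> (inv a0 \<otimes> a) = a" using ab a0 by simp
    moreover have "inv (inv a0 \<otimes> a) \<otimes> b0 = b" unfolding c using ab b0 by (simp add: inv_mult_group m_assoc)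
    ultimately have "u = (a0 \<otimes> (inv a0 \<otimes> a), inv (inv a0 \<otimes> a) \<otimes> b0)" "inv a0 \<otimes> a \<in> A \<inter> B"
      using u by auto
    then show "u \<in> (\<lambda>c. (a0 \<otimes> c, inv c \<otimes> b0)) ` (A \<inter> B)" by blast
  next
    fix u assume "u \<in> (\<lambda>c. (a0 \<otimes> c, inv c \<otimes> b0)) ` (A \<inter> B)"
    then show "u \<in> {(a, b) \<in> A \<times> B. a \<otimes> b = a0 \<otimes> b0}"
      using a0 b0 by (auto simp: m_assoc)
  qed
  moreover have "inj_on (\<lambda>c. (a0 \<otimes> c, inv c \<otimes> b0)) (A \<inter> B)"
    using a0 by (intro inj_onI) auto
  ultimately show ?thesis by (simp add: card_image)
qed

lemma (in group) card_set_mult_Int: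
  assumes A: "subgroup A G" and B: "subgroup B G" and fin: "finite A" "finite B"
  shows "card (A <#> B) * card (A \<inter> B) = card A * card B"
proof -
  define fibre where "fibre x = {(a, b) \<in> A \<times> B. a \<otimes> b = x}" for x
  have "card A * card B = card (\<Union>x \<in> A <#> B. fibre x)"
    by (simp add: card_cartesian_product[symmetric]) (rule arg_cong[of _ _ card], auto simp: fibre_def set_mult_def)
  also have "\<dots> = (\<Sum>x \<in> A <#> B. card (fibre x))"
  proof (rule card_UN_disjoint)
    have "fibre x \<subseteq> A \<times> B" for x by (auto simp: fibre_def)
    then show "\<forall>x \<in> A <#> B. finite (fibre x)" using fin finite_subset by blast
  qed (use fin in \<open>auto simp: fibre_def set_mult_def\<close>)
  also have "\<dots> = (\<Sum>x \<in> A <#> B. card (A \<inter> B))"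
    using card_set_mult_fibre[OF A B] by (intro sum.cong) (auto simp: set_mult_def fibre_def)
  finally show ?thesis by simp
qed

lemma (in group) card_subgroup_dvd:
  assumes "subgroup K G" "subgroup L G" "K \<subseteq> L" "finite L"
  shows "card K dvd card L"
proof -
  interpret L: group "G\<lparr>carrier := L\<rparr>" using assms(2) subgroup_imp_group by blast
  have "subgroup K (G\<lparr>carrier := L\<rparr>)" using assms subgroup_incl by blast
  then have "card (rcosets\<^bsub>G\<lparr>carrier := L\<rparr>\<^esub> K) * card K = card L"
    using L.lagrange assms(4) by (simp add: order_def)
  then show ?thesis by (metis dvd_triv_right)
qed

lemma (in group) subgroup_nat_pow_closed:
  assumes "subgroup K G" "x \<in> K"
  shows "x [^] (n::nat) \<in> K"
  using assms by (induction n) (auto simp: subgroup.one_closed subgroup.m_closed)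

lemma normal_vimage:
  assumes hom: "group_hom G K h" and Y: "Y \<lhd> K"
  shows "{g \<in> carrier G. h g \<in> Y} \<lhd> G"
proof -
  interpret group_hom G K h by fact
  interpret Y: normal Y K by fact
  show ?thesis
  proof (rule G.normal_invI)
    show "subgroup {g \<in> carrier G. h g \<in> Y} G"
      by (rule G.subgroupI) (auto simp: Y.m_inv_closed Y.m_closed intro!: exI[of _ "\<one>\<^bsub>G\<^esub>"])
  next
    fix x n assume "x \<in> carrier G" "n \<in> {g \<in> carrier G. h g \<in> Y}"
    then show "x \<otimes>\<^bsub>G\<^esub> n \<otimes>\<^bsub>G\<^esub> inv\<^bsub>G\<^esub> x \<in> {g \<in> carrier G. h g \<in> Y}"
      using Y.inv_op_closed2 by simp
  qed
qed

lemma (in group) subgroup_centre: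
  assumes "subgroup K G"
  shows "subgroup (centre G K) G"
proof -
  interpret K: subgroup K G by fact
  show ?thesis
  proof (rule subgroupI)
    fix z assume z: "z \<in> centre G K"
    then have zK: "z \<in> K" and zc: "z \<in> carrier G" by (auto simp: centre_def)
    have "inv z \<otimes> x = x \<otimes> inv z" if x: "x \<in> K" for x
    proof -
      have xc: "x \<in> carrier G" using x by simp
      have "inv z \<otimes> x = inv z \<otimes> (x \<otimes> z) \<otimes> inv z" using zc xc by (simp add: m_assoc)
      also have "\<dots> = inv z \<otimes> (z \<otimes> x) \<otimes> inv z" using z x by (auto simp: centre_def)
      also have "\<dots> = x \<otimes> inv z" using zc xc by (simp add: m_assoc[symmetric])
      finally show ?thesis .
    qed
    then show "inv z \<in> centre G K" using zK by (auto simp: centre_def)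
  next
    fix y z assume y: "y \<in> centre G K" and z: "z \<in> centre G K"
    then have c: "y \<in> K" "z \<in> K" "y \<in> carrier G" "z \<in> carrier G" by (auto simp: centre_def)
    have "y \<otimes> z \<otimes> x = x \<otimes> (y \<otimes> z)" if x: "x \<in> K" for x
    proof -
      have xc: "x \<in> carrier G" using x by simp
      have "y \<otimes> z \<otimes> x = y \<otimes> (x \<otimes> z)" using z x c xc by (auto simp: centre_def m_assoc)
      also have "\<dots> = x \<otimes> y \<otimes> z" using y x c xc by (auto simp: centre_def m_assoc[symmetric])
      finally show ?thesis using c xc by (simp add: m_assoc)
    qed
    then show "y \<otimes> z \<in> centre G K" using c by (auto simp: centre_def)
  qed (auto simp: centre_def intro!: exI[of _ \<one>])
qed

lemma (in group) comm_group_centre: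
  assumes "subgroup K G"
  shows "comm_group (G\<lparr>carrier := centre G K\<rparr>)"
proof -
  interpret Z: group "G\<lparr>carrier := centre G K\<rparr>"
    using subgroup_centre[OF assms] subgroup_imp_group by blast
  show ?thesis
  proof (rule Z.group_comm_groupI)
    fix x y assume "x \<in> carrier (G\<lparr>carrier := centre G K\<rparr>)" "y \<in> carrier (G\<lparr>carrier := centre G K\<rparr>)"
    then have "x \<in> centre G K" "y \<in> K" by (auto simp: centre_def)
    then show "x \<otimes>\<^bsub>G\<lparr>carrier := centre G K\<rparr>\<^esub> y = y \<otimes>\<^bsub>G\<lparr>carrier := centre G K\<rparr>\<^esub> x"
      by (simp add: centre_def)
  qed
qed

lemma (in group) weakly_closed_in_centre:
  assumes "subgroup S G"
  shows "W G S \<subseteq> centre G S"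
proof
  fix z assume z: "z \<in> W G S"
  then have zS: "z \<in> S" and closed: "\<And>g. g \<in> carrier G \<Longrightarrow> inv g \<otimes> z \<otimes> g \<in> S \<Longrightarrow> inv g \<otimes> z \<otimes> g = z"
    by (auto simp: W_def weakly_closed_def)
  have "z \<otimes> x = x \<otimes> z" if x: "x \<in> S" for x
  proof -
    have c: "x \<in> carrier G" "z \<in> carrier G" using x zS subgroup.mem_carrier[OF assms] by auto
    have "inv x \<otimes> z \<otimes> x = z" using closed[OF c(1)] x zS assms by (simp add: subgroup.m_closed subgroup.m_inv_closed)
    then show ?thesis using c by (metis m_assoc m_closed mult_inv_cancel_left inv_closed)
  qed
  then show "z \<in> centre G S" using zS by (simp add: centre_def)
qed

lemma (in comm_monoid) endo_finprod:
  assumes "finite I" "f \<in> I \<rightarrow> carrier G" and h: "h \<in> carrier G \<rightarrow> carrier G" "h \<one> = \<one>"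
    "\<And>x y. x \<in> carrier G \<Longrightarrow> y \<in> carrier G \<Longrightarrow> h (x \<otimes> y) = h x \<otimes> h y"
  shows "h (finprod G f I) = finprod G (\<lambda>i. h (f i)) I"
  using assms(1,2)
proof (induction I rule: finite_induct)
  case (insert i I)
  then have f: "f \<in> I \<rightarrow> carrier G" "f i \<in> carrier G" by auto
  then have hf: "(\<lambda>i. h (f i)) \<in> I \<rightarrow> carrier G" "h (f i) \<in> carrier G" using h(1) by auto
  have "h (finprod G f (insert i I)) = h (f i) \<otimes> h (finprod G f I)"
    using finprod_insert[OF insert.hyps f] h(3) f by simp
  also have "\<dots> = finprod G (\<lambda>i. h (f i)) (insert i I)"
    using finprod_insert[OF insert.hyps hf] insert.IH[OF f(1)] by simp
  finally show ?case .
qed (simp add: h)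

lemma (in group) bij_betw_rcosets_shift:
  assumes T: "subgroup T G" and g: "g \<in> carrier G"
  shows "bij_betw (\<lambda>C. C #> g) (rcosets T) (rcosets T)"
proof -
  have shift: "C #> h \<in> rcosets T" "C #> h #> inv h = C"
    if C: "C \<in> rcosets T" and h: "h \<in> carrier G" for C h
  proof -
    obtain a where a: "a \<in> carrier G" "C = T #> a" using C by (auto simp: RCOSETS_def)
    have T_sub: "T \<subseteq> carrier G" using T subgroup.subset by blast
    show "C #> h \<in> rcosets T"
      using a h coset_mult_assoc[OF T_sub] by (auto simp: RCOSETS_def)
    show "C #> h #> inv h = C"
      using a h coset_mult_assoc[OF T_sub] by (simp add: m_assoc)
  qed
  show ?thesis
  proof (rule bij_betw_byWitness[where f' = "\<lambda>C. C #> inv g"])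
    show "\<forall>C \<in> rcosets T. C #> g #> inv g = C" using shift(2) g by blast
    show "\<forall>C \<in> rcosets T. C #> inv g #> g = C" using shift(2)[of _ "inv g"] g by simp
  qed (use shift(1) g in auto)
qed

lemma (in group) some_in_rcoset:
  assumes T: "subgroup T G" and C: "C \<in> rcosets T"
  shows "(SOME g. g \<in> C) \<in> C" "(SOME g. g \<in> C) \<in> carrier G" "C = T #> (SOME g. g \<in> C)"
proof -
  obtain a where a: "a \<in> carrier G" "C = T #> a" using C by (auto simp: RCOSETS_def)
  then show in_C: "(SOME g. g \<in> C) \<in> C" using rcos_self[OF a(1) T] by (meson someI)
  then show "(SOME g. g \<in> C) \<in> carrier G" "C = T #> (SOME g. g \<in> C)"
    using a repr_independence[OF _ a(1) T] r_coset_subset_G[OF subgroup.subset[OF T] a(1)] by auto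
qed

lemma (in group) bij_betw_pow_coprime:
  assumes A: "subgroup A G" and fin: "finite A"
    and comm: "\<And>x y. x \<in> A \<Longrightarrow> y \<in> A \<Longrightarrow> x \<otimes> y = y \<otimes> x"
    and exp: "\<And>x. x \<in> A \<Longrightarrow> x [^] e = \<one>" and coprime: "coprime m (e::nat)"
  shows "bij_betw (\<lambda>x. x [^] m) A A"
proof -
  interpret A: subgroup A G by fact
  have "inj_on (\<lambda>x. x [^] m) A"
  proof (rule inj_onI)
    fix x y assume x: "x \<in> A" and y: "y \<in> A" and eq: "x [^] m = y [^] m"
    have xy: "x \<otimes> inv y \<in> A" "x \<otimes> inv y \<in> carrier G" using x y by auto
    have "(x \<otimes> inv y) [^] m = x [^] m \<otimes> inv (y [^] m)"
      using pow_mult_distrib[OF comm[OF x A.m_inv_closed[OF y]]] x y by (simp add: nat_pow_inv)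
    then have "ord (x \<otimes> inv y) dvd m" using eq y pow_eq_id[OF xy(2)] by simp
    moreover have "ord (x \<otimes> inv y) dvd e" using exp[OF xy(1)] pow_eq_id[OF xy(2)] by simp
    ultimately have "ord (x \<otimes> inv y) = 1" using coprime coprime_common_divisor_nat by blast
    then have "x \<otimes> inv y = \<one>" using pow_eq_id[OF xy(2), of 1] xy(2) by simp
    then show "x = y" using inv_equality[of x "inv y"] x y by simp
  qed
  moreover have "(\<lambda>x. x [^] m) ` A \<subseteq> A" using subgroup_nat_pow_closed[OF A] by blast
  ultimately show ?thesis using endo_inj_surj[OF fin] by (simp add: bij_betw_def)
qed

lemma (in group) kernel_complement_of_bij_restriction:
  assumes Z: "subgroup Z G" and RZ: "R \<subseteq> Z" and into: "\<tau> ` Z \<subseteq> R"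
    and hom: "\<And>x y. x \<in> Z \<Longrightarrow> y \<in> Z \<Longrightarrow> \<tau> (x \<otimes> y) = \<tau> x \<otimes> \<tau> y"
    and bij: "bij_betw \<tau> R R"
  shows "subgroup {z \<in> Z. \<tau> z = \<one>} G" "R \<inter> {z \<in> Z. \<tau> z = \<one>} = {\<one>}"
    "R <#> {z \<in> Z. \<tau> z = \<one>} = Z"
proof -
  interpret Z: subgroup Z G by fact
  let ?K = "{z \<in> Z. \<tau> z = \<one>}"
  have \<tau>_R: "\<tau> z \<in> R" if "z \<in> Z" for z using into that by (simp add: image_subset_iff)
  have \<tau>_carrier: "\<tau> z \<in> carrier G" if "z \<in> Z" for z using \<tau>_R[OF that] RZ by auto
  have "\<tau> \<one> \<otimes> \<tau> \<one> = \<tau> \<one>" using hom[OF Z.one_closed Z.one_closed] by (metis l_one one_closed)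
  then have \<tau>_one: "\<tau> \<one> = \<one>" using \<tau>_carrier[OF Z.one_closed] by (metis l_cancel_one)
  have \<tau>_inv: "\<tau> (inv z) = inv (\<tau> z)" if "z \<in> Z" for z
    using hom[of "inv z" z] that \<tau>_one \<tau>_carrier by (simp add: inv_equality)
  show "subgroup ?K G"
  proof (rule subgroupI)
    show "?K \<noteq> {}" using \<tau>_one Z.one_closed by blast
  qed (auto simp: hom \<tau>_inv)
  have one_R: "\<one> \<in> R" using \<tau>_R[OF Z.one_closed] \<tau>_one by simp
  show "R \<inter> ?K = {\<one>}"
  proof
    show "R \<inter> ?K \<subseteq> {\<one>}"
      using bij one_R \<tau>_one by (auto simp: bij_betw_def inj_on_def)
  qed (use one_R \<tau>_one in auto)
  show "R <#> ?K = Z"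
  proof
    show "R <#> ?K \<subseteq> Z" using RZ by (auto simp: set_mult_def)
  next
    show "Z \<subseteq> R <#> ?K"
    proof
      fix z assume z: "z \<in> Z"
      then obtain w where w: "w \<in> R" "\<tau> w = \<tau> z"
        using into bij by (metis bij_betw_imp_surj_on image_eqI image_iff subsetD)
      have wz: "w \<in> carrier G" "z \<in> carrier G" using w(1) z RZ by auto
      have "inv w \<otimes> z \<in> ?K"
        using w z RZ \<tau>_carrier by (auto simp: hom \<tau>_inv)
      moreover have "z = w \<otimes> (inv w \<otimes> z)" using wz by (simp add: m_assoc[symmetric])
      ultimately show "z \<in> R <#> ?K" using w(1) by (auto simp: set_mult_def)
    qed
  qed
qed

section \<open>The subgroups O_p and O_{p'}\<close>

lemma (in group) largest_normal_subgroup: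
  assumes fin: "finite (carrier G)" and one: "P {\<one>}"
    and mult: "\<And>M N. M \<lhd> G \<Longrightarrow> N \<lhd> G \<Longrightarrow> P M \<Longrightarrow> P N \<Longrightarrow> P (M <#> N)"
  shows "largest_normal G P \<lhd> G" "P (largest_normal G P)"
proof -
  define \<N> where "\<N> = {N. N \<lhd> G \<and> P N}"
  have "\<N> \<subseteq> Pow (carrier G)" by (auto simp: \<N>_def dest: normal_imp_subgroup subgroup.subset)
  then have fin_\<N>: "finite \<N>" using fin by (meson finite_Pow_iff finite_subset)
  have "{\<one>} \<in> \<N>" using one_is_normal one by (simp add: \<N>_def)
  then have "Max (card ` \<N>) \<in> card ` \<N>" using fin_\<N> by (intro Max_in) auto
  then obtain N where N: "N \<in> \<N>" and "card N = Max (card ` \<N>)" by auto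
  then have max: "card M \<le> card N" if "M \<in> \<N>" for M using fin_\<N> that by simp
  have largest: "M \<subseteq> N" if "M \<in> \<N>" for M
  proof -
    have M: "M \<lhd> G" "P M" and N': "N \<lhd> G" "P N" using that N by (auto simp: \<N>_def)
    have MN: "M <#> N \<in> \<N>" using mult[OF M(1) N'(1) M(2) N'(2)] normal_subgroup_set_mult_closed[OF M(1) N'(1)]
      by (simp add: \<N>_def)
    interpret M: subgroup M G using M(1) normal_imp_subgroup by blast
    interpret N: subgroup N G using N'(1) normal_imp_subgroup by blast
    have sub_M: "M \<subseteq> M <#> N"
      by (force simp: set_mult_def intro: bexI[of _ \<one>])
    have sub_N: "N \<subseteq> M <#> N"
      by (force simp: set_mult_def intro: bexI[of _ \<one>])
    have "finite (M <#> N)"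
      using setmult_subset_G[OF normal_imp_subgroup[THEN subgroup.subset, OF M(1)]
          normal_imp_subgroup[THEN subgroup.subset, OF N'(1)]] fin finite_subset by blast
    then have "M <#> N = N" using card_seteq[OF _ sub_N max[OF MN]] by simp
    then show ?thesis using sub_M by simp
  qed
  have "largest_normal G P = N"
    unfolding largest_normal_def
    by (rule the_equality) (use N largest in \<open>auto simp: \<N>_def\<close>)
  then show "largest_normal G P \<lhd> G" "P (largest_normal G P)" using N by (auto simp: \<N>_def)
qed

lemma (in group) normal_p'_subgroup_O_p':
  assumes fin: "finite (carrier G)" and p: "Factorial_Ring.prime p"
  shows "O_p' G p \<lhd> G" "\<not> p dvd card (O_p' G p)"
proof -
  have mult: "p'_group_set p (M <#> N)"
    if MN: "M \<lhd> G" "N \<lhd> G" "p'_group_set p M" "p'_group_set p N" for M N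
  proof -
    have sub: "subgroup M G" "subgroup N G" using MN(1,2) normal_imp_subgroup by auto
    have "card (M <#> N) * card (M \<inter> N) = card M * card N"
      using card_set_mult_Int[OF sub] MN(3,4) by (simp add: p'_group_set_def)
    then have "\<not> p dvd card (M <#> N)"
      using MN(3,4) p by (metis dvd_mult2 p'_group_set_def prime_dvd_mult_iff)
    moreover have "finite (M <#> N)"
      using setmult_subset_G[OF subgroup.subset[OF sub(1)] subgroup.subset[OF sub(2)]] fin finite_subset
      by blast
    ultimately show ?thesis by (simp add: p'_group_set_def)
  qed
  have one: "p'_group_set p {\<one>}" using p by (auto simp: p'_group_set_def)
  show "O_p' G p \<lhd> G" "\<not> p dvd card (O_p' G p)"
    using largest_normal_subgroup[OF fin one mult] unfolding O_p'_def p'_group_set_def by simp_all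
qed

lemma (in group) normal_p_subgroup_O_p:
  assumes fin: "finite (carrier G)" and p: "Factorial_Ring.prime p"
  shows "O_p G p \<lhd> G" "\<exists>n. card (O_p G p) = p ^ n"
proof -
  have mult: "p_group_set p (M <#> N)"
    if MN: "M \<lhd> G" "N \<lhd> G" "p_group_set p M" "p_group_set p N" for M N
  proof -
    have sub: "subgroup M G" "subgroup N G" using MN(1,2) normal_imp_subgroup by auto
    obtain a b where "card M = p ^ a" "card N = p ^ b" using MN(3,4) by (auto simp: p_group_set_def)
    moreover have "finite M" "finite N" using sub fin subgroup.subset finite_subset by metis+
    ultimately have "card (M <#> N) dvd p ^ (a + b)"
      using card_set_mult_Int[OF sub] by (metis dvd_triv_left power_add)
    then show ?thesis using p divides_primepow_nat by (auto simp: p_group_set_def)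
  qed
  have one: "p_group_set p {\<one>}" by (auto simp: p_group_set_def intro: exI[of _ 0])
  show "O_p G p \<lhd> G" "\<exists>n. card (O_p G p) = p ^ n"
    using largest_normal_subgroup[OF fin one mult] unfolding O_p_def p_group_set_def by simp_all
qed

section \<open>Norm maps of actions on abelian groups\<close>

locale comm_group_right_action = G: group G + A: comm_group A
  for G :: "('g, 'm) monoid_scheme" and A :: "('a, 'n) monoid_scheme" +
  fixes act :: "'g \<Rightarrow> 'a \<Rightarrow> 'a"
  assumes act_closed: "\<lbrakk>g \<in> carrier G; x \<in> carrier A\<rbrakk> \<Longrightarrow> act g x \<in> carrier A"
    and act_mult:
      "\<lbrakk>g \<in> carrier G; x \<in> carrier A; y \<in> carrier A\<rbrakk> \<Longrightarrow> act g (x \<otimes>\<^bsub>A\<^esub> y) = act g x \<otimes>\<^bsub>A\<^esub> act g y"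
    and act_compose:
      "\<lbrakk>g \<in> carrier G; h \<in> carrier G; x \<in> carrier A\<rbrakk> \<Longrightarrow> act (g \<otimes>\<^bsub>G\<^esub> h) x = act h (act g x)"
begin

lemma act_one: "g \<in> carrier G \<Longrightarrow> act g \<one>\<^bsub>A\<^esub> = \<one>\<^bsub>A\<^esub>"
  using act_mult[of g "\<one>\<^bsub>A\<^esub>" "\<one>\<^bsub>A\<^esub>"] act_closed[of g "\<one>\<^bsub>A\<^esub>"] by (metis A.l_cancel_one A.l_one A.one_closed)

definition fixed_points :: "'a set" where
  "fixed_points = {u \<in> carrier A. \<forall>g \<in> carrier G. act g u = u}"

lemma subgroup_fixed_points: "subgroup fixed_points A"
proof (rule A.subgroupI)
  fix u assume "u \<in> fixed_points"
  then have u: "u \<in> carrier A" and fixed: "\<And>g. g \<in> carrier G \<Longrightarrow> act g u = u"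
    by (auto simp: fixed_points_def)
  have "act g (inv\<^bsub>A\<^esub> u) = inv\<^bsub>A\<^esub> u" if g: "g \<in> carrier G" for g
  proof -
    have "act g (inv\<^bsub>A\<^esub> u) \<otimes>\<^bsub>A\<^esub> u = act g (inv\<^bsub>A\<^esub> u \<otimes>\<^bsub>A\<^esub> u)"
      by (simp only: act_mult[OF g A.inv_closed[OF u] u] fixed[OF g])
    also have "\<dots> = \<one>\<^bsub>A\<^esub>" using act_one[OF g] u by simp
    finally show ?thesis using A.inv_equality[OF _ u act_closed[OF g A.inv_closed[OF u]]] by simp
  qed
  then show "inv\<^bsub>A\<^esub> u \<in> fixed_points" using u by (simp add: fixed_points_def)
next
  fix u v assume "u \<in> fixed_points" "v \<in> fixed_points"
  then show "u \<otimes>\<^bsub>A\<^esub> v \<in> fixed_points" by (simp add: fixed_points_def act_mult)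
qed (use act_one in \<open>auto simp: fixed_points_def\<close>)

(* SOME g. g \<in> C picks a representative of the coset C; by act_rcoset_eq the factor does not
   depend on this choice as long as u is fixed by T. *)
definition norm_map :: "'g set \<Rightarrow> 'a \<Rightarrow> 'a" where
  "norm_map T u = finprod A (\<lambda>C. act (SOME g. g \<in> C) u) (rcosets\<^bsub>G\<^esub> T)"

context
  fixes T assumes T: "subgroup T G" and fin: "finite (carrier G)"
begin

lemma finite_rcosets: "finite (rcosets\<^bsub>G\<^esub> T)"
  using G.rcosets_subset_PowG[OF T] fin by (simp add: finite_subset)

lemma norm_map_factor_closed:
  "u \<in> carrier A \<Longrightarrow> (\<lambda>C. act (SOME g. g \<in> C) u) \<in> rcosets\<^bsub>G\<^esub> T \<rightarrow> carrier A"
  using G.some_in_rcoset(2)[OF T] act_closed by blast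

lemma norm_map_closed: "u \<in> carrier A \<Longrightarrow> norm_map T u \<in> carrier A"
  unfolding norm_map_def using norm_map_factor_closed by simp

lemma norm_map_mult:
  assumes "u \<in> carrier A" "v \<in> carrier A"
  shows "norm_map T (u \<otimes>\<^bsub>A\<^esub> v) = norm_map T u \<otimes>\<^bsub>A\<^esub> norm_map T v"
proof -
  have "norm_map T (u \<otimes>\<^bsub>A\<^esub> v)
      = finprod A (\<lambda>C. act (SOME g. g \<in> C) u \<otimes>\<^bsub>A\<^esub> act (SOME g. g \<in> C) v) (rcosets\<^bsub>G\<^esub> T)"
    unfolding norm_map_def
    by (intro A.finprod_cong') (use assms G.some_in_rcoset(2)[OF T] act_closed act_mult in auto)
  then show ?thesis
    unfolding norm_map_def using A.finprod_multf norm_map_factor_closed assms by simp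
qed

lemma act_rcoset_eq:
  assumes u: "u \<in> carrier A" "\<And>t. t \<in> T \<Longrightarrow> act t u = u"
    and x: "x \<in> carrier G" and y: "y \<in> T #>\<^bsub>G\<^esub> x"
  shows "act y u = act x u"
proof -
  obtain t where t: "t \<in> T" "y = t \<otimes>\<^bsub>G\<^esub> x" using y by (auto simp: r_coset_def)
  have "act y u = act x (act t u)" using act_compose[OF subgroup.mem_carrier[OF T t(1)] x u(1)] t(2) by simp
  then show ?thesis using u(2)[OF t(1)] by simp
qed

lemma norm_map_invariant:
  assumes u: "u \<in> carrier A" "\<And>t. t \<in> T \<Longrightarrow> act t u = u" and g: "g \<in> carrier G"
  shows "act g (norm_map T u) = norm_map T u"
proof -
  let ?rep = "\<lambda>C. SOME g. g \<in> C"
  have bij: "bij_betw (\<lambda>C. C #>\<^bsub>G\<^esub> g) (rcosets\<^bsub>G\<^esub> T) (rcosets\<^bsub>G\<^esub> T)"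
    using G.bij_betw_rcosets_shift[OF T g] .
  have shift: "act g (act (?rep C) u) = act (?rep (C #>\<^bsub>G\<^esub> g)) u" if C: "C \<in> rcosets\<^bsub>G\<^esub> T" for C
  proof -
    have rep: "?rep C \<in> carrier G" "C = T #>\<^bsub>G\<^esub> ?rep C" using G.some_in_rcoset[OF T C] by auto
    have "C #>\<^bsub>G\<^esub> g \<in> rcosets\<^bsub>G\<^esub> T" using bij C by (auto simp: bij_betw_def)
    then have "?rep (C #>\<^bsub>G\<^esub> g) \<in> C #>\<^bsub>G\<^esub> g" by (rule G.some_in_rcoset(1)[OF T])
    moreover have "C #>\<^bsub>G\<^esub> g = T #>\<^bsub>G\<^esub> (?rep C \<otimes>\<^bsub>G\<^esub> g)"
      using G.coset_mult_assoc[OF subgroup.subset[OF T] rep(1) g] rep(2) by simp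
    ultimately have "act (?rep (C #>\<^bsub>G\<^esub> g)) u = act (?rep C \<otimes>\<^bsub>G\<^esub> g) u"
      using act_rcoset_eq[OF u, of "?rep C \<otimes>\<^bsub>G\<^esub> g"] rep(1) g by (simp only: G.m_closed)
    then show ?thesis using act_compose[OF rep(1) g u(1)] by simp
  qed
  have "act g (norm_map T u) = finprod A (\<lambda>C. act g (act (?rep C) u)) (rcosets\<^bsub>G\<^esub> T)"
    unfolding norm_map_def
    by (rule A.endo_finprod[OF finite_rcosets norm_map_factor_closed[OF u(1)]])
       (use act_closed act_one act_mult g in auto)
  also have "\<dots> = finprod A (\<lambda>C. act (?rep (C #>\<^bsub>G\<^esub> g)) u) (rcosets\<^bsub>G\<^esub> T)"
    using shift act_closed[OF g] norm_map_factor_closed[OF u(1)]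
    by (intro A.finprod_cong') (auto simp: Pi_iff simp flip: shift)
  also have "\<dots> = norm_map T u"
    using A.finprod_reindex[of "\<lambda>C. act (?rep C) u" "\<lambda>C. C #>\<^bsub>G\<^esub> g" "rcosets\<^bsub>G\<^esub> T"]
      bij norm_map_factor_closed[OF u(1)]
    by (simp add: bij_betw_def norm_map_def)
  finally show ?thesis .
qed

lemma norm_map_of_invariant:
  assumes u: "u \<in> carrier A" "\<And>g. g \<in> carrier G \<Longrightarrow> act g u = u"
  shows "norm_map T u = u [^]\<^bsub>A\<^esub> card (rcosets\<^bsub>G\<^esub> T)"
proof -
  have "norm_map T u = finprod A (\<lambda>C. u) (rcosets\<^bsub>G\<^esub> T)"
    unfolding norm_map_def by (intro A.finprod_cong') (use u G.some_in_rcoset(2)[OF T] in auto)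
  then show ?thesis using A.finprod_const[OF u(1)] by simp
qed

end

end

section \<open>Projection onto a complement of a normal subgroup\<close>

locale normal_complement = group H for H (structure) +
  fixes N P Q
  assumes N_normal: "N \<lhd> H" and Q_normal: "Q \<lhd> H" and P_subgroup: "subgroup P H"
    and N_mult_P: "N <#> P = Q" and N_Int_P: "N \<inter> P = {\<one>}"
begin

interpretation N: normal N H by (rule N_normal)
interpretation Q: normal Q H by (rule Q_normal)
interpretation P: subgroup P H by (rule P_subgroup)

lemma N_sub_Q: "N \<subseteq> Q"
proof
  fix n assume n: "n \<in> N"
  then have "n \<otimes> \<one> \<in> N <#> P" unfolding set_mult_def using P.one_closed by blast
  then show "n \<in> Q" using N_mult_P n by simp
qed

lemma P_sub_Q: "P \<subseteq> Q"
proof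
  fix y assume y: "y \<in> P"
  then have "\<one> \<otimes> y \<in> N <#> P" unfolding set_mult_def using N.one_closed by blast
  then show "y \<in> Q" using N_mult_P y by simp
qed

definition proj :: "'a \<Rightarrow> 'a" where
  "proj q = (THE y. y \<in> P \<and> q \<otimes> inv y \<in> N)"

lemma proj_unique:
  assumes q: "q \<in> carrier H" and y: "y \<in> P" "q \<otimes> inv y \<in> N" and z: "z \<in> P" "q \<otimes> inv z \<in> N"
  shows "y = z"
proof -
  have "inv (q \<otimes> inv y) \<otimes> (q \<otimes> inv z) \<in> N" using y z by simp
  moreover have "inv (q \<otimes> inv y) \<otimes> (q \<otimes> inv z) = y \<otimes> inv z"
    using q y z by (simp add: inv_mult_group m_assoc)
  ultimately have "y \<otimes> inv z \<in> N \<inter> P" using y z by simp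
  then have "y \<otimes> inv z = \<one>" using N_Int_P by simp
  then show ?thesis using y z by (metis P.mem_carrier inv_closed inv_equality inv_inv)
qed

lemma proj_spec:
  assumes q: "q \<in> Q"
  shows "proj q \<in> P" "q \<otimes> inv (proj q) \<in> N"
proof -
  obtain n y where ny: "n \<in> N" "y \<in> P" "q = n \<otimes> y"
    using q N_mult_P by (auto simp: set_mult_def)
  then have y: "y \<in> P \<and> q \<otimes> inv y \<in> N" by (simp add: m_assoc)
  have "proj q \<in> P \<and> q \<otimes> inv (proj q) \<in> N"
    unfolding proj_def by (rule theI[of _ y]) (use y proj_unique Q.mem_carrier[OF q] in blast)+
  then show "proj q \<in> P" "q \<otimes> inv (proj q) \<in> N" by auto
qed

lemma proj_eqI: "\<lbrakk>q \<in> Q; y \<in> P; q \<otimes> inv y \<in> N\<rbrakk> \<Longrightarrow> proj q = y"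
  using proj_unique Q.mem_carrier proj_spec by blast

lemma proj_of_P: "y \<in> P \<Longrightarrow> proj y = y"
  using proj_eqI P_sub_Q by auto

lemma proj_of_N: "n \<in> N \<Longrightarrow> proj n = \<one>"
  using proj_eqI N_sub_Q by auto

lemma proj_mult:
  assumes q: "q \<in> Q" and r: "r \<in> Q"
  shows "proj (q \<otimes> r) = proj q \<otimes> proj r"
proof (rule proj_eqI)
  have c: "q \<in> carrier H" "r \<in> carrier H" "proj q \<in> carrier H" "proj r \<in> carrier H"
    using q r proj_spec(1) by auto
  have "(q \<otimes> inv (proj q)) \<otimes> (proj q \<otimes> (r \<otimes> inv (proj r)) \<otimes> inv (proj q)) \<in> N"
    using proj_spec(2)[OF q] N.inv_op_closed2[OF c(3) proj_spec(2)[OF r]] by simp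
  also have "(q \<otimes> inv (proj q)) \<otimes> (proj q \<otimes> (r \<otimes> inv (proj r)) \<otimes> inv (proj q))
      = q \<otimes> r \<otimes> inv (proj q \<otimes> proj r)"
    using c by (simp add: m_assoc inv_mult_group)
  finally show "q \<otimes> r \<otimes> inv (proj q \<otimes> proj r) \<in> N" .
qed (use q r proj_spec(1) in auto)

(* The conjugation action of H on Q/N, transported to P via the isomorphism P \<cong> Q/N. *)
definition conj_act :: "'a \<Rightarrow> 'a \<Rightarrow> 'a" where
  "conj_act g x = proj (inv g \<otimes> x \<otimes> g)"

lemma conj_act_closed: "\<lbrakk>g \<in> carrier H; x \<in> Q\<rbrakk> \<Longrightarrow> conj_act g x \<in> P"
  unfolding conj_act_def using proj_spec(1) Q.inv_op_closed1 by blast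

lemma conj_act_mult:
  assumes g: "g \<in> carrier H" and x: "x \<in> Q" and y: "y \<in> Q"
  shows "conj_act g (x \<otimes> y) = conj_act g x \<otimes> conj_act g y"
proof -
  have "inv g \<otimes> (x \<otimes> y) \<otimes> g = (inv g \<otimes> x \<otimes> g) \<otimes> (inv g \<otimes> y \<otimes> g)"
    using g x y by (simp add: m_assoc)
  then show ?thesis unfolding conj_act_def using proj_mult Q.inv_op_closed1 g x y by simp
qed

lemma conj_act_eq: "\<lbrakk>g \<in> carrier H; inv g \<otimes> x \<otimes> g \<in> P\<rbrakk> \<Longrightarrow> conj_act g x = inv g \<otimes> x \<otimes> g"
  unfolding conj_act_def by (rule proj_of_P)

lemma conj_act_compose:
  assumes g: "g \<in> carrier H" and h: "h \<in> carrier H" and x: "x \<in> Q"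
  shows "conj_act (g \<otimes> h) x = conj_act h (conj_act g x)"
proof -
  define c where "c = inv g \<otimes> x \<otimes> g"
  have c: "c \<in> Q" using c_def Q.inv_op_closed1 g x by blast
  define n where "n = c \<otimes> inv (proj c)"
  have n: "n \<in> N" "c = n \<otimes> proj c" using proj_spec[OF c] c by (auto simp: n_def m_assoc)
  have nc: "n \<in> carrier H" "proj c \<in> carrier H" using n proj_spec[OF c] by auto
  have "inv (g \<otimes> h) \<otimes> x \<otimes> (g \<otimes> h) = inv h \<otimes> c \<otimes> h"
    using g h x by (simp add: c_def m_assoc inv_mult_group)
  also have "\<dots> = (inv h \<otimes> n \<otimes> h) \<otimes> (inv h \<otimes> proj c \<otimes> h)"
    using h nc by (subst n(2)) (simp add: m_assoc)
  finally have "inv (g \<otimes> h) \<otimes> x \<otimes> (g \<otimes> h) = (inv h \<otimes> n \<otimes> h) \<otimes> (inv h \<otimes> proj c \<otimes> h)" .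
  moreover have "inv h \<otimes> n \<otimes> h \<in> N" using N.inv_op_closed1 h n(1) by blast
  moreover have "inv h \<otimes> proj c \<otimes> h \<in> Q" using Q.inv_op_closed1 h P_sub_Q proj_spec(1)[OF c] by blast
  ultimately have "conj_act (g \<otimes> h) x = proj (inv h \<otimes> n \<otimes> h) \<otimes> conj_act h (proj c)"
    unfolding conj_act_def using proj_mult N_sub_Q by auto
  then show ?thesis using proj_of_N \<open>inv h \<otimes> n \<otimes> h \<in> N\<close> conj_act_closed h proj_spec(1)[OF c] P_sub_Q
    by (auto simp: conj_act_def c_def)
qed

lemma conj_act_N:
  assumes n: "n \<in> N" and x: "x \<in> P"
  shows "conj_act n x = x"
proof -
  have c: "n \<in> carrier H" "x \<in> carrier H" using n x by auto
  have m: "inv x \<otimes> inv n \<otimes> x \<otimes> n \<in> N" using N.inv_op_closed1 c n by simp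
  have "inv n \<otimes> x \<otimes> n = x \<otimes> (inv x \<otimes> inv n \<otimes> x \<otimes> n)" using c by (simp add: m_assoc)
  then have "conj_act n x = proj x \<otimes> proj (inv x \<otimes> inv n \<otimes> x \<otimes> n)"
    unfolding conj_act_def using proj_mult[OF subsetD[OF P_sub_Q x] subsetD[OF N_sub_Q m]] by simp
  then show ?thesis using proj_of_P x proj_of_N m c by simp
qed

lemma conj_act_inv_cancel: "\<lbrakk>g \<in> carrier H; y \<in> P\<rbrakk> \<Longrightarrow> conj_act g (conj_act (inv g) y) = y"
  using conj_act_compose[of "inv g" g y] conj_act_eq[of \<one> y] P_sub_Q by auto

lemma conj_act_centre:
  assumes g: "g \<in> carrier H" and c: "c \<in> centre H P"
  shows "conj_act g c \<in> centre H P"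
proof -
  have cP: "c \<in> P" using c by (simp add: centre_def)
  have "conj_act g c \<otimes> y = y \<otimes> conj_act g c" if y: "y \<in> P" for y
  proof -
    define y' where "y' = conj_act (inv g) y"
    have y': "y' \<in> P" "conj_act g y' = y" using conj_act_closed g y P_sub_Q conj_act_inv_cancel
      by (auto simp: y'_def)
    have Q: "c \<in> Q" "y' \<in> Q" using cP y'(1) P_sub_Q by auto
    have "conj_act g c \<otimes> y = conj_act g (c \<otimes> y')" using conj_act_mult[OF g Q] y'(2) by simp
    also have "c \<otimes> y' = y' \<otimes> c" using c y'(1) by (auto simp: centre_def)
    also have "conj_act g (y' \<otimes> c) = y \<otimes> conj_act g c" using conj_act_mult[OF g Q(2,1)] y'(2) by simp
    finally show ?thesis .
  qed
  then show ?thesis using conj_act_closed[OF g] cP P_sub_Q by (auto simp: centre_def)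
qed

lemma comm_group_right_action_centre:
  "comm_group_right_action H (H\<lparr>carrier := centre H P\<rparr>) conj_act"
proof (intro comm_group_right_action.intro comm_group_right_action_axioms.intro)
  have ZP: "centre H P \<subseteq> Q" using P_sub_Q by (auto simp: centre_def)
  show "comm_group (H\<lparr>carrier := centre H P\<rparr>)" by (rule comm_group_centre[OF P_subgroup])
  show "conj_act g x \<in> carrier (H\<lparr>carrier := centre H P\<rparr>)"
    if "g \<in> carrier H" "x \<in> carrier (H\<lparr>carrier := centre H P\<rparr>)" for g x
    using conj_act_centre that by simp
  show "conj_act g (x \<otimes>\<^bsub>H\<lparr>carrier := centre H P\<rparr>\<^esub> y)
      = conj_act g x \<otimes>\<^bsub>H\<lparr>carrier := centre H P\<rparr>\<^esub> conj_act g y"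
    if "g \<in> carrier H" "x \<in> carrier (H\<lparr>carrier := centre H P\<rparr>)"
      "y \<in> carrier (H\<lparr>carrier := centre H P\<rparr>)" for g x y
    using conj_act_mult that ZP by auto
  show "conj_act (g \<otimes> h) x = conj_act h (conj_act g x)"
    if "g \<in> carrier H" "h \<in> carrier H" "x \<in> carrier (H\<lparr>carrier := centre H P\<rparr>)" for g h x
    using conj_act_compose that ZP by auto
qed (rule is_group)

definition N_part :: "'a \<Rightarrow> 'a" where
  "N_part q = inv (proj q) \<otimes> q"

lemma N_part_in_N:
  assumes q: "q \<in> Q"
  shows "N_part q \<in> N"
proof -
  have c: "q \<in> carrier H" "proj q \<in> carrier H" using q proj_spec(1)[OF q] by auto
  have "inv (proj q) \<otimes> (q \<otimes> inv (proj q)) \<otimes> proj q \<in> N"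
    using N.inv_op_closed1[OF c(2) proj_spec(2)[OF q]] .
  then show ?thesis using c by (simp add: N_part_def m_assoc)
qed

lemma N_part_mult_P:
  assumes y: "y \<in> P" and r: "r \<in> Q"
  shows "N_part (y \<otimes> r) = N_part r"
proof -
  have "proj (y \<otimes> r) = y \<otimes> proj r" using proj_mult[OF _ r] proj_of_P[OF y] P_sub_Q y by auto
  then show ?thesis using y r proj_spec(1)[OF r] by (simp add: N_part_def inv_mult_group m_assoc)
qed

lemma N_part_of_N: "n \<in> N \<Longrightarrow> N_part n = n"
  by (simp add: N_part_def proj_of_N)

lemma N_part_iterate:
  assumes n: "n \<in> N" and q: "q \<in> Q"
  shows "((\<lambda>m. N_part (m \<otimes> q)) ^^ j) n = N_part (n \<otimes> q [^] j)"
proof (induction j)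
  case 0
  then show ?case using n by (simp add: N_part_of_N)
next
  case (Suc j)
  have nq: "n \<otimes> q [^] j \<in> Q"
    using n N_sub_Q subgroup_nat_pow_closed[OF Q.subgroup_axioms q] by auto
  have c: "n \<in> carrier H" "q \<in> carrier H" using n q by auto
  have "N_part (N_part (n \<otimes> q [^] j) \<otimes> q) = N_part (inv (proj (n \<otimes> q [^] j)) \<otimes> (n \<otimes> q [^] j \<otimes> q))"
    using c proj_spec(1)[OF nq] by (simp add: N_part_def m_assoc)
  also have "\<dots> = N_part (n \<otimes> q [^] j \<otimes> q)"
    using N_part_mult_P[OF P.m_inv_closed[OF proj_spec(1)[OF nq]] Q.m_closed[OF nq q]] .
  also have "n \<otimes> q [^] j \<otimes> q = n \<otimes> q [^] Suc j" using c by (simp add: m_assoc)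
  finally show ?case using Suc by simp
qed

(* The map ?\<sigma> below is right multiplication by q on the right cosets of P in Q, each of which
   meets N in exactly one element; a fixed point n means P n q = P n. *)
lemma p_element_conj_into_P:
  assumes fin: "finite (carrier H)" and p: "Factorial_Ring.prime p" and coprime: "\<not> p dvd card N"
    and q: "q \<in> Q" and p_elem: "q [^] (p ^ k) = \<one>"
  obtains n where "n \<in> N" "n \<otimes> q \<otimes> inv n \<in> P"
proof -
  let ?\<sigma> = "\<lambda>m. N_part (m \<otimes> q)"
  have closed: "?\<sigma> ` N \<subseteq> N" using N_part_in_N N_sub_Q q by auto
  have periodic: "(?\<sigma> ^^ (p ^ k)) n = n" if "n \<in> N" for n
    using N_part_iterate[OF that q] p_elem that by (simp add: N_part_of_N)
  have "finite N" using fin finite_subset N.subset by blast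
  then obtain n where n: "n \<in> N" "N_part (n \<otimes> q) = n"
    using prime_power_periodic_map_fixed_point[OF _ closed periodic p coprime] by blast
  have nq: "n \<otimes> q \<in> Q" "proj (n \<otimes> q) \<in> carrier H" using n(1) N_sub_Q q proj_spec(1) by auto
  have "inv (proj (n \<otimes> q)) \<otimes> (n \<otimes> q) = n" using n(2) by (simp add: N_part_def)
  then have "n \<otimes> q = proj (n \<otimes> q) \<otimes> n" using nq by (metis Q.mem_carrier mult_inv_cancel_left)
  then have "n \<otimes> q \<otimes> inv n = proj (n \<otimes> q) \<otimes> n \<otimes> inv n" by (rule arg_cong)
  also have "\<dots> = proj (n \<otimes> q)" using nq(2) N.mem_carrier[OF n(1)] by (simp add: m_assoc)
  finally show ?thesis using that n(1) proj_spec(1)[OF nq(1)] by simp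
qed

end

section \<open>The subgroup O_{p',p} and a Sylow subgroup\<close>

locale finite_group_sylow = group H for H (structure) +
  fixes p S
  assumes finite_carrier: "finite (carrier H)" and prime: "Factorial_Ring.prime p"
    and sylow: "sylow_subgroup H p S"
begin

lemma S_subgroup: "subgroup S H"
  using sylow by (simp add: sylow_subgroup_def)

lemma card_S: "card S = p ^ multiplicity p (order H)"
  using sylow by (simp add: sylow_subgroup_def)

lemma O_p'_normal: "O_p' H p \<lhd> H"
  using normal_p'_subgroup_O_p'[OF finite_carrier prime] by simp

lemma not_dvd_card_O_p': "\<not> p dvd card (O_p' H p)"
  using normal_p'_subgroup_O_p'[OF finite_carrier prime] by simp

interpretation N: normal "O_p' H p" H by (rule O_p'_normal)

lemma group_Mod_O_p': "group (H Mod O_p' H p)"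
  by (rule N.factorgroup_is_group)

lemma O_p_Mod_normal: "O_p (H Mod O_p' H p) p \<lhd> H Mod O_p' H p"
  using group.normal_p_subgroup_O_p[OF group_Mod_O_p' _ prime] finite_carrier
  by (simp add: carrier_FactGroup)

lemma card_O_p_Mod: "\<exists>n. card (O_p (H Mod O_p' H p) p) = p ^ n"
  using group.normal_p_subgroup_O_p[OF group_Mod_O_p' _ prime] finite_carrier
  by (simp add: carrier_FactGroup)

lemma O_p'p_normal: "O_p'p H p \<lhd> H"
proof -
  have "group_hom H (H Mod O_p' H p) (\<lambda>a. O_p' H p #> a)"
    using N.r_coset_hom_Mod group_Mod_O_p' by (simp add: group_hom_def group_hom_axioms_def is_group)
  from normal_vimage[OF this O_p_Mod_normal] show ?thesis by (simp add: O_p'p_def)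
qed

lemma O_p'_sub_O_p'p: "O_p' H p \<subseteq> O_p'p H p"
proof
  fix n assume n: "n \<in> O_p' H p"
  have "O_p' H p #> n = \<one>\<^bsub>H Mod O_p' H p\<^esub>" using N.rcos_const[OF is_group n] by simp
  moreover have "\<one>\<^bsub>H Mod O_p' H p\<^esub> \<in> O_p (H Mod O_p' H p) p"
    using O_p_Mod_normal normal_imp_subgroup subgroup.one_closed by blast
  ultimately show "n \<in> O_p'p H p" using n by (simp add: O_p'p_def)
qed

lemma card_O_p'p: "card (O_p'p H p) = card (O_p' H p) * card (O_p (H Mod O_p' H p) p)"
proof -
  let ?N = "O_p' H p" and ?B = "O_p (H Mod O_p' H p) p"
  have B_rcosets: "?B \<subseteq> rcosets ?N"
    using O_p_Mod_normal normal_imp_subgroup subgroup.subset by (fastforce simp: FactGroup_def)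
  have union: "O_p'p H p = \<Union> ?B"
  proof
    show "O_p'p H p \<subseteq> \<Union> ?B"
      using rcos_self[OF _ N.subgroup_axioms] by (auto simp: O_p'p_def)
    show "\<Union> ?B \<subseteq> O_p'p H p"
    proof
      fix x assume "x \<in> \<Union> ?B"
      then obtain C where C: "C \<in> ?B" "x \<in> C" by blast
      then obtain g where g: "g \<in> carrier H" "C = ?N #> g" using B_rcosets by (auto simp: RCOSETS_def)
      then have "?N #> x = C" using repr_independence[of x ?N g] C N.subgroup_axioms by simp
      moreover have "x \<in> carrier H" using C g r_coset_subset_G[OF N.subset] by blast
      ultimately show "x \<in> O_p'p H p" using C by (simp add: O_p'p_def)
    qed
  qed
  have "card ?N * card ?B = card (\<Union> ?B)"
  proof (rule card_partition)
    show "finite ?B"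
      using B_rcosets finite_carrier rcosets_subset_PowG[OF N.subgroup_axioms] by (meson finite_Pow_iff finite_subset)
    show "finite (\<Union> ?B)"
      using union O_p'p_normal normal_imp_subgroup subgroup.subset finite_carrier finite_subset by metis
    show "card C = card ?N" if "C \<in> ?B" for C
      using B_rcosets that card_rcosets_equal[OF _ N.subset] by auto
    show "C \<inter> D = {}" if "C \<in> ?B" "D \<in> ?B" "C \<noteq> D" for C D
      using rcos_disjoint[OF N.subgroup_axioms] B_rcosets that by (auto simp: pairwise_def disjnt_def)
  qed
  then show ?thesis using union by simp
qed

interpretation Q: normal "O_p'p H p" H by (rule O_p'p_normal)
interpretation S: subgroup S H by (rule S_subgroup)

lemma finite_subgroup: "subgroup K H \<Longrightarrow> finite K"
  using finite_carrier subgroup.subset finite_subset by metis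

lemma card_subgroup_of_Sylow:
  assumes "subgroup K H" "K \<subseteq> S"
  obtains i where "card K = p ^ i"
  using card_subgroup_dvd[OF assms(1) S_subgroup assms(2) finite_subgroup[OF S_subgroup]] card_S
    divides_primepow_nat[OF prime] by metis

lemma O_p'_Int_subgroup_of_Sylow:
  assumes K: "subgroup K H" "K \<subseteq> S"
  shows "O_p' H p \<inter> K = {\<one>}"
proof -
  have sub: "subgroup (O_p' H p \<inter> K) H" using N.subgroup_axioms K subgroups_Inter_pair by blast
  obtain i where i: "card (O_p' H p \<inter> K) = p ^ i"
    using card_subgroup_of_Sylow[OF sub] K(2) by blast
  have "card (O_p' H p \<inter> K) dvd card (O_p' H p)"
    using card_subgroup_dvd[OF sub N.subgroup_axioms _ finite_subgroup[OF N.subgroup_axioms]] by blast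
  then have "i = 0" using i not_dvd_card_O_p' by (metis dvd_power dvd_trans neq0_conv)
  then have "card (O_p' H p \<inter> K) = 1" using i by simp
  moreover have "\<one> \<in> O_p' H p \<inter> K" using sub subgroup.one_closed by blast
  ultimately show ?thesis by (metis card_1_singletonE singletonD)
qed

lemma le_multiplicity_order:
  assumes "p ^ e dvd order H"
  shows "e \<le> multiplicity p (order H)"
proof -
  have "order H \<noteq> 0" using finite_carrier order_gt_0_iff_finite by simp
  moreover have "\<not> is_unit p" using prime_gt_1_nat[OF prime] by simp
  ultimately show ?thesis using assms power_dvd_iff_le_multiplicity by blast
qed

(* QS is a subgroup, so the p-part of |Q| |S| / |S \<inter> Q| divides |H|; as |Q| = |N| |O_p(H/N)| and
   |S| is the full p-part of |H|, this bounds |O_p(H/N)| by |S \<inter> Q|. *)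
lemma card_O_p_Mod_le: "card (O_p (H Mod O_p' H p) p) \<le> card (S \<inter> O_p'p H p)"
proof -
  let ?N = "O_p' H p" and ?Q = "O_p'p H p" and ?a = "multiplicity p (order H)"
  obtain n where n: "card (O_p (H Mod ?N) p) = p ^ n" using card_O_p_Mod by blast
  obtain b where b: "card (S \<inter> ?Q) = p ^ b"
    using card_subgroup_of_Sylow[OF subgroups_Inter_pair[OF S.subgroup_axioms Q.subgroup_axioms]] by blast
  have QS: "subgroup (?Q <#> S) H"
    using second_isomorphism_grp.normal_set_mult_subgroup O_p'p_normal S_subgroup
    unfolding second_isomorphism_grp_def second_isomorphism_grp_axioms_def by blast
  have eq: "card (?Q <#> S) * p ^ b = card ?N * p ^ n * p ^ ?a"
    using card_set_mult_Int[OF Q.subgroup_axioms S_subgroup finite_subgroup finite_subgroup]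
      Q.subgroup_axioms S_subgroup b card_O_p'p n card_S by (simp add: Int_commute)
  have "n \<le> b"
  proof (rule ccontr)
    assume "\<not> n \<le> b"
    then have "p ^ n * p ^ ?a = p ^ (n - b + ?a) * p ^ b" by (simp add: power_add[symmetric])
    then have "card (?Q <#> S) = card ?N * p ^ (n - b + ?a)"
      using eq prime_gt_0_nat[OF prime] by (simp add: mult.assoc)
    moreover have "p ^ Suc ?a dvd p ^ (n - b + ?a)"
      using \<open>\<not> n \<le> b\<close> by (intro le_imp_power_dvd) simp
    ultimately have "p ^ Suc ?a dvd card (?Q <#> S)" by simp
    then have "p ^ Suc ?a dvd order H"
      using card_subgroup_dvd[OF QS subgroup_self] subgroup.subset[OF QS] finite_carrier
      by (metis dvd_trans dvd_triv_right order_def)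
    then show False using le_multiplicity_order by fastforce
  qed
  then show ?thesis using n b prime_gt_1_nat[OF prime] by (simp add: power_increasing)
qed

lemma O_p'_mult_Sylow: "O_p' H p <#> (S \<inter> O_p'p H p) = O_p'p H p"
proof -
  let ?N = "O_p' H p" and ?Q = "O_p'p H p" and ?P = "S \<inter> O_p'p H p"
  have P: "subgroup ?P H" using S.subgroup_axioms Q.subgroup_axioms subgroups_Inter_pair by blast
  have sub: "?N <#> ?P \<subseteq> ?Q"
    using O_p'_sub_O_p'p by (auto simp: set_mult_def)
  have "card (?N <#> ?P) = card ?N * card ?P"
    using card_set_mult_Int[OF N.subgroup_axioms P finite_subgroup finite_subgroup]
      N.subgroup_axioms P O_p'_Int_subgroup_of_Sylow[OF P] by simp
  then have "card ?Q \<le> card (?N <#> ?P)" using card_O_p'p card_O_p_Mod_le by simp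
  then show ?thesis using sub card_seteq finite_subgroup[OF Q.subgroup_axioms] by blast
qed

lemma normal_complement_O_p'p: "normal_complement H (O_p' H p) (S \<inter> O_p'p H p) (O_p'p H p)"
  by unfold_locales
     (use O_p'_normal O_p'p_normal O_p'_mult_Sylow O_p'_Int_subgroup_of_Sylow S.subgroup_axioms Q.subgroup_axioms
      in \<open>auto intro: subgroups_Inter_pair\<close>)

lemma Sylow_pow_eq_one: "x \<in> S \<Longrightarrow> x [^] (p ^ multiplicity p (order H)) = \<one>"
  using group.pow_order_eq_1[OF subgroup_imp_group[OF S_subgroup]] finite_subgroup[OF S_subgroup] card_S
  by (simp add: order_def nat_pow_consistent[symmetric])

lemma coprime_index_Sylow: "coprime (card (rcosets S)) (p ^ multiplicity p (order H))"
proof -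
  have "\<not> p dvd card (rcosets S)"
  proof
    assume "p dvd card (rcosets S)"
    then have "p ^ Suc (multiplicity p (order H)) dvd card (rcosets S) * card S"
      using card_S by simp
    then have "p ^ Suc (multiplicity p (order H)) dvd order H" using lagrange[OF S_subgroup] by simp
    then show False using le_multiplicity_order by fastforce
  qed
  then show ?thesis using prime prime_imp_power_coprime by blast
qed

end

section \<open>Weakly closed elements of the centre of a Sylow subgroup\<close>

locale centre_in_O_p'p = finite_group_sylow +
  assumes centre_subset: "centre H S \<subseteq> O_p'p H p"
begin

sublocale NC: normal_complement H "O_p' H p" "S \<inter> O_p'p H p" "O_p'p H p"
  by (rule normal_complement_O_p'p)

sublocale A: comm_group_right_action H "H\<lparr>carrier := centre H (S \<inter> O_p'p H p)\<rparr>" NC.conj_act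
  by (rule NC.comm_group_right_action_centre)

interpretation Q: normal "O_p'p H p" H by (rule O_p'p_normal)
interpretation S: subgroup S H by (rule S_subgroup)

lemma centre_S_subset_centre_P: "centre H S \<subseteq> centre H (S \<inter> O_p'p H p)"
  using centre_subset by (auto simp: centre_def)

lemma conj_act_eq_conj_in_S: "\<lbrakk>g \<in> carrier H; x \<in> S \<inter> O_p'p H p; inv g \<otimes> x \<otimes> g \<in> S\<rbrakk>
    \<Longrightarrow> NC.conj_act g x = inv g \<otimes> x \<otimes> g"
  using NC.conj_act_eq Q.inv_op_closed1 by blast

lemma weakly_closed_fixed:
  assumes z: "z \<in> W H S" and g: "g \<in> carrier H"
  shows "NC.conj_act g z = z"
proof -
  have zP: "z \<in> S \<inter> O_p'p H p"
    using weakly_closed_in_centre[OF S_subgroup] z centre_S_subset_centre_P by (auto simp: centre_def)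
  let ?x = "inv g \<otimes> z \<otimes> g"
  have "?x [^] (p ^ multiplicity p (order H)) = \<one>"
    using conj_nat_pow g zP Sylow_pow_eq_one by auto
  then obtain n where n: "n \<in> O_p' H p" "n \<otimes> ?x \<otimes> inv n \<in> S \<inter> O_p'p H p"
    using NC.p_element_conj_into_P[OF finite_carrier prime not_dvd_card_O_p'] Q.inv_op_closed1 g zP by blast
  have nc: "n \<in> carrier H" "inv n \<in> O_p' H p"
    using n(1) O_p'_normal normal_imp_subgroup subgroup.mem_carrier subgroup.m_inv_closed by metis+
  have gn: "g \<otimes> inv n \<in> carrier H" using g nc by simp
  have eq: "inv (g \<otimes> inv n) \<otimes> z \<otimes> (g \<otimes> inv n) = n \<otimes> ?x \<otimes> inv n"
    using g nc zP by (simp add: inv_mult_group m_assoc)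
  have closed: "\<And>h. h \<in> carrier H \<Longrightarrow> inv h \<otimes> z \<otimes> h \<in> S \<Longrightarrow> inv h \<otimes> z \<otimes> h = z"
    using z by (auto simp: W_def weakly_closed_def)
  have "inv (g \<otimes> inv n) \<otimes> z \<otimes> (g \<otimes> inv n) = z" using closed[OF gn] eq n(2) by simp
  then have "NC.conj_act (g \<otimes> inv n) z = z" using conj_act_eq_conj_in_S[OF gn zP] eq n(2) by simp
  then show ?thesis
    using NC.conj_act_compose[of g "inv n" z] NC.conj_act_N[OF nc(2)] NC.conj_act_closed g nc zP by auto
qed

lemma W_eq_fixed_points: "W H S = centre H S \<inter> A.fixed_points"
proof (intro equalityI subsetI)
  fix z assume z: "z \<in> W H S"
  then show "z \<in> centre H S \<inter> A.fixed_points"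
    using weakly_closed_in_centre[OF S_subgroup] centre_S_subset_centre_P weakly_closed_fixed
    by (auto simp: A.fixed_points_def)
next
  fix z assume z: "z \<in> centre H S \<inter> A.fixed_points"
  then have zP: "z \<in> S \<inter> O_p'p H p" using centre_S_subset_centre_P by (auto simp: centre_def)
  have "inv g \<otimes> z \<otimes> g = z" if "g \<in> carrier H" "inv g \<otimes> z \<otimes> g \<in> S" for g
    using conj_act_eq_conj_in_S[OF that(1) zP that(2)] z that(1) by (simp add: A.fixed_points_def)
  then show "z \<in> W H S" using zP by (auto simp: W_def weakly_closed_def)
qed

lemma subgroup_W: "subgroup (W H S) H"
  unfolding W_eq_fixed_points
  by (rule subgroups_Inter_pair[OF subgroup_centre[OF S_subgroup]
        incl_subgroup[OF subgroup_centre[OF NC.P_subgroup] A.subgroup_fixed_points]])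

lemma norm_map_in_W:
  assumes u: "u \<in> centre H S"
  shows "A.norm_map S u \<in> W H S"
proof -
  have uA: "u \<in> carrier (H\<lparr>carrier := centre H (S \<inter> O_p'p H p)\<rparr>)" using u centre_S_subset_centre_P by auto
  have fixed: "NC.conj_act s u = u" if "s \<in> S" for s
  proof -
    have "inv s \<otimes> u \<otimes> s = u" using u that by (auto simp: centre_def m_assoc)
    then show ?thesis using conj_act_eq_conj_in_S[of s u] that u centre_S_subset_centre_P by (auto simp: centre_def)
  qed
  let ?t = "A.norm_map S u"
  have t: "?t \<in> centre H (S \<inter> O_p'p H p)"
    using A.norm_map_closed[OF S_subgroup finite_carrier uA] by simp
  have invariant: "NC.conj_act g ?t = ?t" if "g \<in> carrier H" for g
    using A.norm_map_invariant[OF S_subgroup finite_carrier uA fixed that] .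
  have "?t \<otimes> s = s \<otimes> ?t" if s: "s \<in> S" for s
  proof -
    have tc: "?t \<in> S" "?t \<in> carrier H" using t by (auto simp: centre_def)
    have "inv s \<otimes> ?t \<otimes> s = ?t" using conj_act_eq_conj_in_S[of s ?t] invariant s t by (auto simp: centre_def)
    then show ?thesis using s tc by (metis S.mem_carrier m_assoc m_closed mult_inv_cancel_left inv_closed)
  qed
  then have "?t \<in> centre H S" using t by (auto simp: centre_def)
  then show ?thesis using invariant t by (simp add: W_eq_fixed_points A.fixed_points_def)
qed

lemma norm_map_on_W:
  assumes w: "w \<in> W H S"
  shows "A.norm_map S w = w [^] card (rcosets S)"
proof -
  have "w \<in> carrier (H\<lparr>carrier := centre H (S \<inter> O_p'p H p)\<rparr>)"
    using w by (simp add: W_eq_fixed_points A.fixed_points_def)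
  then show ?thesis
    using A.norm_map_of_invariant[OF S_subgroup finite_carrier] weakly_closed_fixed[OF w]
    by (simp add: nat_pow_consistent[symmetric])
qed

theorem centre_splits_over_W:
  "\<exists>K. subgroup K H \<and> K \<subseteq> centre H S \<and> W H S \<inter> K = {\<one>} \<and> W H S <#> K = centre H S"
proof -
  have W_sub: "W H S \<subseteq> centre H S" by (rule weakly_closed_in_centre[OF S_subgroup])
  have "bij_betw (\<lambda>w. w [^] card (rcosets S)) (W H S) (W H S)"
    using W_sub by (intro bij_betw_pow_coprime[OF subgroup_W finite_subgroup[OF subgroup_W] _ Sylow_pow_eq_one coprime_index_Sylow])
      (auto simp: centre_def W_def)
  then have bij: "bij_betw (A.norm_map S) (W H S) (W H S)"
    by (rule bij_betw_cong[THEN iffD1, rotated]) (simp add: norm_map_on_W)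
  have mult: "A.norm_map S (x \<otimes> y) = A.norm_map S x \<otimes> A.norm_map S y"
    if "x \<in> centre H S" "y \<in> centre H S" for x y
    using A.norm_map_mult[OF S_subgroup finite_carrier] that centre_S_subset_centre_P by auto
  show ?thesis
    using kernel_complement_of_bij_restriction[OF subgroup_centre[OF S_subgroup] W_sub _ mult bij] norm_map_in_W
    by blast
qed

end

theorem proposition2p2:
  fixes H :: "('a, 'b) monoid_scheme" and p :: nat and S :: "'a set"
  assumes "group H" and "finite (carrier H)" and "Factorial_Ring.prime p"
    and "sylow_subgroup H p S"
    and "centre H S \<subseteq> O_p'p H p"
  shows "\<exists>K. subgroup K H \<and> K \<subseteq> centre H S \<and> W H S \<inter> K = {\<one>\<^bsub>H\<^esub>}
             \<and> W H S <#>\<^bsub>H\<^esub> K = centre H S"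
proof -
  interpret centre_in_O_p'p H p S
    using assms by (simp add: centre_in_O_p'p_def centre_in_O_p'p_axioms_def
        finite_group_sylow_def finite_group_sylow_axioms_def)
  show ?thesis by (rule centre_splits_over_W)
qed

end
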